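(* For all integers $n\ge0$, $p\ge1$ and every real $x$, $$\mathcal{B}_{n,p}(x)=p\int_0^1(1-t)^{p-1}G_{n,x}(t)\,dt,\qquad\text{where } G_{n,x}(t)=\sum_{k=0}^{n}\binom{n}{k}\phi_k(t)\,x^{n-k}.$$
   Context: $S(n,k)$ denotes the Stirling numbers of the second kind and $\phi_n(t)=\sum_{k=0}^nS(n,k)t^k$ the Bell (exponential) polynomials; thus $\sum_{n\ge0}G_{n,x}(t)\frac{z^n}{n!}=\exp(xz+t(e^z-1))$. For an integer $p\ge0$, the $p$-Bell numbers $\mathcal{B}_{n,p}$ are defined by $\sum_{n\ge0}\mathcal{B}_{n,p}\frac{z^n}{n!}=\sum_{n\ge0}\binom{n+p}{p}^{-1}\frac{(e^z-1)^n}{n!}$, and the $p$-Bell polynomials by $\mathcal{B}_{n,p}(x)=\sum_{k=0}^n\binom nk\mathcal{B}_{k,p}x^{n-k}$ (equivalently $\sum_n\mathcal{B}_{n,p}(x)\frac{z^n}{n!}=e^{xz}\sum_{n}\mathcal{B}_{n,p}\frac{z^n}{n!}$). *)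

theory Defs
  imports "HOL-Analysis.Analysis" "HOL-Combinatorics.Stirling"
    "HOL-Computational_Algebra.Formal_Power_Series"
begin

definition bell_poly :: "nat \<Rightarrow> real \<Rightarrow> real" where
  "bell_poly n t = (\<Sum>k = 0..n. real (Stirling n k) * t ^ k)"

definition G_poly :: "nat \<Rightarrow> real \<Rightarrow> real \<Rightarrow> real" where
  "G_poly n x t = (\<Sum>k = 0..n. real (n choose k) * bell_poly k t * x ^ (n - k))"

text \<open>p-Bell numbers via their exponential generating function
  sum_k binom(k+p,p)^(-1) (e^z-1)^k/k!.  Since (e^z - 1)^k has order k,
  the n-th coefficient only receives contributions from k \<le> n, so the
  coefficient extraction of the infinite sum is the finite sum below.\<close>
definition p_bell :: "nat \<Rightarrow> nat \<Rightarrow> real" where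
  "p_bell n p = fact n * (\<Sum>k = 0..n.
      fps_nth ((fps_exp (1::real) - 1) ^ k) n / (fact k * real ((k + p) choose p)))"

definition p_bell_poly :: "nat \<Rightarrow> nat \<Rightarrow> real \<Rightarrow> real" where
  "p_bell_poly n p x = (\<Sum>k = 0..n. real (n choose k) * p_bell k p * x ^ (n - k))"

end

theory Submission
  imports Defs
begin

(* Differentiating (e^z - 1)^k reproduces the recurrence of S(n,k), so the coefficient of
   z^n/n! in (e^z - 1)^k/k! is S(n,k) and B_{n,p} = sum_k S(n,k) / binom(k+p,p).  By the Beta
   integral, p * int_0^1 (1-t)^(p-1) t^k dt = 1 / binom(k+p,p); hence integrating the Bell
   polynomial phi_n against the weight p (1-t)^(p-1) yields B_{n,p}, and the identity for
   B_{n,p}(x) follows by linearity. *)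

lemma fps_deriv_exp_minus_one_power:
  fixes k :: nat
  defines "E \<equiv> fps_exp (1::'a::field_char_0) - 1"
  shows "fps_deriv (E ^ Suc k) = of_nat (Suc k) * (E ^ Suc k + E ^ k)"
proof -
  have "fps_deriv E = E + 1"
    by (simp add: E_def)
  then show ?thesis
    unfolding fps_deriv_power' by (simp add: algebra_simps)
qed

lemma fact_mult_fps_nth_exp_minus_one_power:
  "fact n * fps_nth ((fps_exp (1::'a::field_char_0) - 1) ^ k) n = fact k * of_nat (Stirling n k)"
proof (induction n arbitrary: k)
  case 0
  then show ?case by (cases k) (simp_all add: fps_nth_power_0)
next
  case (Suc n)
  show ?case
  proof (cases k)
    case 0
    then show ?thesis by simp
  next
    case (Suc j)
    let ?E = "fps_exp (1::'a) - 1"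
    have "fact (Suc n) * fps_nth (?E ^ Suc j) (Suc n) = fact n * fps_nth (fps_deriv (?E ^ Suc j)) n"
      unfolding fps_deriv_nth by (simp add: algebra_simps del: power_Suc)
    also have "\<dots> = of_nat (Suc j) * (fact n * fps_nth (?E ^ Suc j) n + fact n * fps_nth (?E ^ j) n)"
      unfolding fps_deriv_exp_minus_one_power
      by (simp add: fps_of_nat[symmetric] algebra_simps del: power_Suc)
    also have "\<dots> = fact (Suc j) * of_nat (Stirling (Suc n) (Suc j))"
      unfolding Suc.IH by (simp add: algebra_simps)
    finally show ?thesis using Suc by simp
  qed
qed

lemma p_bell_eq_sum_Stirling:
  "p_bell n p = (\<Sum>k = 0..n. real (Stirling n k) / real ((k + p) choose p))"
proof -
  have "fact n * fps_nth ((fps_exp 1 - 1) ^ k) n / (fact k * real ((k + p) choose p)) =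
      real (Stirling n k) / real ((k + p) choose p)" for k
    unfolding fact_mult_fps_nth_exp_minus_one_power[where 'a=real] by simp
  then show ?thesis
    unfolding p_bell_def sum_distrib_left by (simp add: mult.assoc)
qed

lemma has_integral_one_minus_power_mult_power:
  "((\<lambda>t. (1 - t) ^ m * t ^ k) has_integral fact k * fact m / fact (k + m + 1)) {0..(1::real)}"
proof -
  have "((\<lambda>t. t powr (real k + 1 - 1) * (1 - t) powr (real m + 1 - 1)) has_integral
      Beta (real k + 1) (real m + 1)) {0<..<1}"
    using has_integral_Beta_real[of "real k + 1" "real m + 1"]
    by (simp add: has_integral_Icc_iff_Ioo)
  moreover have "Beta (real k + 1) (real m + 1) = fact k * fact m / fact (k + m + 1)"
  proof -
    have Gamma_Suc: "Gamma (real j + 1) = fact j" for j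
      using Gamma_fact[of j] by (simp add: add.commute)
    have "real k + 1 + (real m + 1) = real (k + m + 1) + 1"
      by simp
    then show ?thesis
      unfolding Beta_def by (simp only: Gamma_Suc)
  qed
  ultimately have "((\<lambda>t. (1 - t) ^ m * t ^ k) has_integral fact k * fact m / fact (k + m + 1))
      {0<..<(1::real)}"
    by (subst has_integral_cong[where g = "\<lambda>t. t powr k * (1 - t) powr m"])
      (auto simp: powr_realpow)
  then show ?thesis
    by (simp add: has_integral_Icc_iff_Ioo)
qed

lemma fact_mult_fact_div_fact_eq_inverse_binomial:
  "fact k * fact m / fact (k + m + 1) = 1 / (real (Suc m) * real ((k + Suc m) choose Suc m))"
proof -
  have "real ((k + Suc m) choose Suc m) = fact (k + m + 1) / (fact (Suc m) * fact k)"
    by (subst binomial_fact) simp_all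
  then show ?thesis
    by simp
qed

lemma has_integral_one_minus_power_mult_bell_poly:
  "((\<lambda>t. (1 - t) ^ m * bell_poly n t) has_integral p_bell n (Suc m) / real (Suc m)) {0..(1::real)}"
proof -
  have integrand: "(1 - t) ^ m * bell_poly n t =
      (\<Sum>k = 0..n. real (Stirling n k) * ((1 - t) ^ m * t ^ k))" for t :: real
    unfolding bell_poly_def sum_distrib_left by (simp only: mult.left_commute)
  have integral: "(\<Sum>k = 0..n. real (Stirling n k) * (fact k * fact m / fact (k + m + 1))) =
      p_bell n (Suc m) / real (Suc m)"
    unfolding p_bell_eq_sum_Stirling sum_divide_distrib
      fact_mult_fact_div_fact_eq_inverse_binomial
    by (simp only: divide_divide_eq_left times_divide_eq_right mult_1_left mult_1_right mult.commute)
  have "((\<lambda>t. \<Sum>k = 0..n. real (Stirling n k) * ((1 - t) ^ m * t ^ k)) has_integral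
      (\<Sum>k = 0..n. real (Stirling n k) * (fact k * fact m / fact (k + m + 1)))) {0..(1::real)}"
    by (intro has_integral_sum finite_atLeastAtMost has_integral_mult_right
        has_integral_one_minus_power_mult_power)
  then show ?thesis
    unfolding integrand integral .
qed

theorem mainTheorem15:
  fixes n p :: nat and x :: real
  assumes "p \<ge> 1"
  shows "p_bell_poly n p x =
    real p * integral {0..1} (\<lambda>t. (1 - t) ^ (p - 1) * G_poly n x t)"
proof -
  obtain m where p: "p = Suc m"
    using assms by (cases p) auto
  have "((\<lambda>t. \<Sum>k = 0..n. real (n choose k) * x ^ (n - k) * ((1 - t) ^ m * bell_poly k t))
      has_integral (\<Sum>k = 0..n. real (n choose k) * x ^ (n - k) * (p_bell k p / real p))) {0..1}"
    unfolding p by (intro has_integral_sum finite_atLeastAtMost has_integral_mult_right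
        has_integral_one_minus_power_mult_bell_poly)
  then have "((\<lambda>t. (1 - t) ^ (p - 1) * G_poly n x t) has_integral p_bell_poly n p x / real p) {0..1}"
    unfolding G_poly_def p_bell_poly_def sum_distrib_left sum_divide_distrib p
    by (simp add: ac_simps)
  then show ?thesis
    using p by (simp add: integral_unique)
qed

end
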